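(* Let $X$ be a topological space, $\alpha : X\to X$ a homeomorphism, $\mathcal{F}$ a Banach function space on $X$ satisfying condition $\Omega_\alpha$, and $w$ a positive measurable function on $X$ such that $w$ and $w^{-1}$ are bounded. Let $T = T_{\alpha,w}$, $S = T^{-1}$ and $C^{(n)} = \frac12(T^n + S^n)$ for $n\in\mathbb{N}$. Suppose that for each compact subset $K$ of $X$ there exist a strictly increasing sequence of natural numbers $(n_k)_k$ and sequences of Borel subsets $(E_k)_k$, $(F_k)_k$, $(D_k)_k$ of $K$ with $E_k = D_k\cup F_k$ and $D_k \cap F_k = \emptyset$ for all $k$, such that each of the following seven quantities tends to $0$ as $k\to\infty$: (i) $\|\chi_{K\setminus E_k}\|_{\mathcal{F}}$; (ii) $\sup_{x\in D_k} \prod_{j=1}^{2n_k} (w\circ\alpha^{-j})(x)$; (iii) $\sup_{x\in F_k} \prod_{j=0}^{2n_k-1} (w\circ\alpha^{j})^{-1}(x)$; (iv) $\left(\sup_{x\in E_k} \prod_{j=1}^{n_k} (w\circ\alpha^{-j})(x)\right)\cdot\left(\sup_{x\in D_k} \prod_{j=1}^{n_k} (w\circ\alpha^{-j})(x)\right)$; (v) $\left(\sup_{x\in E_k} \prod_{j=1}^{n_k} (w\circ\alpha^{-j})(x)\right)\cdot\left(\sup_{x\in F_k} \prod_{j=0}^{n_k-1} (w\circ\alpha^{j})^{-1}(x)\right)$; (vi) $\left(\sup_{x\in E_k} \prod_{j=0}^{n_k-1} (w\circ\alpha^{j})^{-1}(x)\right)\cdot\left(\sup_{x\in D_k} \prod_{j=1}^{n_k}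 (w\circ\alpha^{-j})(x)\right)$; (vii) $\left(\sup_{x\in E_k} \prod_{j=0}^{n_k-1} (w\circ\alpha^{j})^{-1}(x)\right)\cdot\left(\sup_{x\in F_k} \prod_{j=0}^{n_k-1} (w\circ\alpha^{j})^{-1}(x)\right)$. Then the sequence $(C^{(n)})_{n}$ is topologically transitive for positive supercyclicity.
   Context: $\mathcal{M}_0(X)$ is the set of Borel measurable complex-valued functions on $X$; $\chi_A$ is the characteristic function of a Borel set $A$. A Banach function space on $X$ is a linear subspace $\mathcal{F}\subseteq\mathcal{M}_0(X)$ which is a Banach space under a given norm $\|\cdot\|_{\mathcal F}$. $\mathcal{F}$ is $\alpha$-invariant if for each $f\in\mathcal F$, $f\circ\alpha^{\pm1}\in\mathcal F$ and $\|f\circ\alpha^{\pm1}\|_{\mathcal F} = \|f\|_{\mathcal F}$. $\mathcal F$ is solid if whenever $f\in\mathcal F$, $g\in\mathcal M_0(X)$ and $|g|\le|f|$, then $g\in\mathcal F$ and $\|g\|_{\mathcal F}\le\|f\|_{\mathcal F}$. $\mathcal F$ satisfies condition $\Omega_\alpha$ if: (1) $\mathcal F$ is solid and $\alpha$-invariant; (2) $\chi_E\in\mathcal F$ for every compact $E\subseteq X$; (3) the set $\mathcal F_{bc}$ of bounded compactly supported functions in $\mathcal F$ is dense in $\mathcal F$. $w^{-1} := 1/w$. The weighted composition operator is $T_{\alpha,w}(f) = w\cdot(f\circ\alpha)$, a bounded invertible operator on $\mathcal F$ with inverse $S_{\alpha,w}$; one has $T^n f = \prod_{j=0}^{n-1}(w\circ\alpha^j)\cdot(f\circ\alpha^n)$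 and $S^nf = \prod_{j=1}^{n}(w\circ\alpha^{-j})^{-1}\cdot(f\circ\alpha^{-n})$. The sequence $(C^{(n)})_n$ is topologically transitive for positive supercyclicity if for all non-empty open subsets $O_1,O_2$ of $\mathcal F$ there exist $n\in\mathbb N$ and $\lambda\in\mathbb R^+$ with $\lambda C^{(n)}(O_1)\cap O_2\neq\emptyset$. The supremum over the empty set is taken to be $0$. *)

theory Defs
  imports "HOL-Analysis.Analysis"
begin

definition banach_function_space ::
  "('a::topological_space \<Rightarrow> complex) set \<Rightarrow> (('a \<Rightarrow> complex) \<Rightarrow> real) \<Rightarrow> bool" where
  "banach_function_space Fs N \<longleftrightarrow>
     Fs \<subseteq> borel_measurable borel \<and>
     (\<lambda>x. 0) \<in> Fs \<and>
     (\<forall>f\<in>Fs. \<forall>g\<in>Fs. (\<lambda>x. f x + g x) \<in> Fs) \<and>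
     (\<forall>c. \<forall>f\<in>Fs. (\<lambda>x. c * f x) \<in> Fs) \<and>
     (\<forall>f\<in>Fs. 0 \<le> N f) \<and>
     (\<forall>f\<in>Fs. N f = 0 \<longleftrightarrow> f = (\<lambda>x. 0)) \<and>
     (\<forall>f\<in>Fs. \<forall>g\<in>Fs. N (\<lambda>x. f x + g x) \<le> N f + N g) \<and>
     (\<forall>c. \<forall>f\<in>Fs. N (\<lambda>x. c * f x) = cmod c * N f) \<and>
     (\<forall>u. (\<forall>n. u n \<in> Fs) \<and>
          (\<forall>e>0. \<exists>M. \<forall>m\<ge>M. \<forall>n\<ge>M. N (\<lambda>x. u m x - u n x) < e)
        \<longrightarrow> (\<exists>l\<in>Fs. (\<lambda>n. N (\<lambda>x. u n x - l x)) \<longlonglongrightarrow> 0))"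

definition solid :: "('a::topological_space \<Rightarrow> complex) set \<Rightarrow> (('a \<Rightarrow> complex) \<Rightarrow> real) \<Rightarrow> bool" where
  "solid Fs N \<longleftrightarrow>
     (\<forall>f\<in>Fs. \<forall>g\<in>borel_measurable borel. (\<forall>x. cmod (g x) \<le> cmod (f x)) \<longrightarrow> g \<in> Fs \<and> N g \<le> N f)"

definition alpha_invariant ::
  "('a \<Rightarrow> complex) set \<Rightarrow> (('a \<Rightarrow> complex) \<Rightarrow> real) \<Rightarrow> ('a \<Rightarrow> 'a) \<Rightarrow> bool" where
  "alpha_invariant Fs N \<alpha> \<longleftrightarrow>
     (\<forall>f\<in>Fs. f \<circ> \<alpha> \<in> Fs \<and> f \<circ> inv \<alpha> \<in> Fs \<and> N (f \<circ> \<alpha>) = N f \<and> N (f \<circ> inv \<alpha>) = N f)"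

definition condition_Omega ::
  "('a::topological_space \<Rightarrow> complex) set \<Rightarrow> (('a \<Rightarrow> complex) \<Rightarrow> real) \<Rightarrow> ('a \<Rightarrow> 'a) \<Rightarrow> bool" where
  "condition_Omega Fs N \<alpha> \<longleftrightarrow>
     solid Fs N \<and> alpha_invariant Fs N \<alpha> \<and>
     (\<forall>E. compact E \<longrightarrow> (indicator E :: 'a \<Rightarrow> complex) \<in> Fs) \<and>
     (\<forall>f\<in>Fs. \<forall>e>0. \<exists>g\<in>Fs. bounded (range g) \<and> compact (closure {x. g x \<noteq> 0})
                          \<and> N (\<lambda>x. f x - g x) < e)"

definition Twc :: "('a \<Rightarrow> 'a) \<Rightarrow> ('a \<Rightarrow> real) \<Rightarrow> ('a \<Rightarrow> complex) \<Rightarrow> ('a \<Rightarrow> complex)" where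
  "Twc \<alpha> w f = (\<lambda>x. complex_of_real (w x) * f (\<alpha> x))"

definition Swc :: "('a \<Rightarrow> 'a) \<Rightarrow> ('a \<Rightarrow> real) \<Rightarrow> ('a \<Rightarrow> complex) \<Rightarrow> ('a \<Rightarrow> complex)" where
  "Swc \<alpha> w f = (\<lambda>x. f (inv \<alpha> x) / complex_of_real (w (inv \<alpha> x)))"

definition Cop :: "('a \<Rightarrow> 'a) \<Rightarrow> ('a \<Rightarrow> real) \<Rightarrow> nat \<Rightarrow> ('a \<Rightarrow> complex) \<Rightarrow> ('a \<Rightarrow> complex)" where
  "Cop \<alpha> w n f = (\<lambda>x. (1/2) * (((Twc \<alpha> w) ^^ n) f x + ((Swc \<alpha> w) ^^ n) f x))"

definition F_open :: "('a \<Rightarrow> complex) set \<Rightarrow> (('a \<Rightarrow> complex) \<Rightarrow> real) \<Rightarrow> ('a \<Rightarrow> complex) set \<Rightarrow> bool" where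
  "F_open Fs N U \<longleftrightarrow> U \<subseteq> Fs \<and>
     (\<forall>f\<in>U. \<exists>e>0. \<forall>g\<in>Fs. N (\<lambda>x. g x - f x) < e \<longrightarrow> g \<in> U)"

definition top_trans_pos_supercyclic ::
  "('a \<Rightarrow> complex) set \<Rightarrow> (('a \<Rightarrow> complex) \<Rightarrow> real) \<Rightarrow> (nat \<Rightarrow> ('a \<Rightarrow> complex) \<Rightarrow> ('a \<Rightarrow> complex)) \<Rightarrow> bool" where
  "top_trans_pos_supercyclic Fs N C \<longleftrightarrow>
     (\<forall>O1 O2. F_open Fs N O1 \<and> O1 \<noteq> {} \<and> F_open Fs N O2 \<and> O2 \<noteq> {} \<longrightarrow>
        (\<exists>n\<ge>1. \<exists>c::real. c > 0 \<and> (\<exists>f\<in>O1. (\<lambda>x. complex_of_real c * C n f x) \<in> O2)))"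

definition supr :: "'a set \<Rightarrow> ('a \<Rightarrow> real) \<Rightarrow> real" where
  "supr A g = (if A = {} then 0 else Sup (g ` A))"

definition wback :: "('a \<Rightarrow> 'a) \<Rightarrow> ('a \<Rightarrow> real) \<Rightarrow> nat \<Rightarrow> 'a \<Rightarrow> real" where
  "wback \<alpha> w n x = (\<Prod>j\<in>{1..n}. w (((inv \<alpha>) ^^ j) x))"

definition wfwdinv :: "('a \<Rightarrow> 'a) \<Rightarrow> ('a \<Rightarrow> real) \<Rightarrow> nat \<Rightarrow> 'a \<Rightarrow> real" where
  "wfwdinv \<alpha> w n x = (\<Prod>j<n. 1 / w ((\<alpha> ^^ j) x))"

end

theory Submission
  imports Defs
begin

text \<open>Given non-empty open sets, replace their centres by bounded compactly supported
functions f and g, supported in a compact set K, and take the sets of the hypothesis for K.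
With n = n_k and a free factor \<lambda> > 0 put
  h = f \<chi>_E + (2/\<lambda>) (T^n (g \<chi>_D) + S^n (g \<chi>_F)).
Since T^n S^n = id, the difference \<lambda> C^(n) h - g equals
  (\<lambda>/2)(T^n + S^n)(f \<chi>_E) + T^2n (g \<chi>_D) + S^2n (g \<chi>_F) - g \<chi>_(K-E),
while h - f = - f \<chi>_(K-E) + (2/\<lambda>)(T^n (g \<chi>_D) + S^n (g \<chi>_F)).
By \<alpha>-invariance, T^n and S^n act in norm as multiplication by the weight products, so by
solidity their norms on functions carried by a set are bounded by the suprema of these products.
Hence h - f is small up to a term b/\<lambda> and \<lambda> C^(n) h - g up to a term \<lambda> a, where a is
the sum of the two suprema over E and b the sum of the suprema over D and F. The products
(iv)-(vii) say exactly that a b \<rightarrow> 0, so taking \<lambda> \<approx> sqrt (b/a) makes both vanish.\<close>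

lemma funpow_inverse_cancel:
  fixes f g :: "'a \<Rightarrow> 'a"
  assumes "\<And>u. f (g u) = u"
  shows "(f ^^ n) ((g ^^ n) u) = u"
proof (induction n arbitrary: u)
  case (Suc n)
  have "(f ^^ Suc n) ((g ^^ Suc n) u) = (f ^^ n) (f (g ((g ^^ n) u)))"
    by (metis comp_apply funpow.simps(2) funpow_Suc_right)
  then show ?case using Suc assms by simp
qed simp

lemma funpow_double_apply: "(f ^^ (2 * n)) x = (f ^^ n) ((f ^^ n) x)"
  by (simp add: mult_2 funpow_add)

lemma compose_funpow_invariant:
  assumes invariant: "\<And>f. f \<in> Fs \<Longrightarrow> f \<circ> \<beta> \<in> Fs \<and> N (f \<circ> \<beta>) = N f" and f: "f \<in> Fs"
  shows "f \<circ> (\<beta> ^^ n) \<in> Fs \<and> N (f \<circ> (\<beta> ^^ n)) = N f"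
proof (induction n)
  case (Suc n)
  have "f \<circ> (\<beta> ^^ Suc n) = (f \<circ> (\<beta> ^^ n)) \<circ> \<beta>"
    by (simp only: funpow_Suc_right o_assoc)
  then show ?case using Suc invariant by metis
qed (simp add: f)

lemma supr_upper: "x \<in> A \<Longrightarrow> bdd_above (f ` A) \<Longrightarrow> f x \<le> supr A f"
  unfolding supr_def by (auto intro: cSUP_upper)

lemma supr_nonneg:
  assumes "\<And>x. x \<in> A \<Longrightarrow> 0 \<le> f x" and "bdd_above (f ` A)"
  shows "0 \<le> supr A f"
proof (cases "A = {}")
  case False
  then obtain x where "x \<in> A" by blast
  then show ?thesis using assms supr_upper[of x A f] by fastforce
qed (simp add: supr_def)

lemma sqrt_ratio_balance:
  fixes a b d :: real
  assumes a: "0 \<le> a" and b: "0 \<le> b" and d: "0 < d"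
  shows "sqrt ((b + d) / (a + d)) * a \<le> sqrt ((a + d) * (b + d))"
    and "b / sqrt ((b + d) / (a + d)) \<le> sqrt ((a + d) * (b + d))"
proof -
  define x where "x = sqrt (a + d)"
  define y where "y = sqrt (b + d)"
  have x: "0 < x" "x * x = a + d" using a d unfolding x_def by auto
  have y: "0 < y" "y * y = b + d" using b d unfolding y_def by auto
  have ratio: "sqrt ((b + d) / (a + d)) = y / x" unfolding x_def y_def by (simp add: real_sqrt_divide)
  have prod: "sqrt ((a + d) * (b + d)) = x * y" unfolding x_def y_def by (simp add: real_sqrt_mult)
  have "y * a \<le> y * (x * x)" using x y assms by (intro mult_left_mono) auto
  then show "sqrt ((b + d) / (a + d)) * a \<le> sqrt ((a + d) * (b + d))"
    unfolding ratio prod using x y d by (simp add: field_simps)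
  have "x * b \<le> x * (y * y)" using x y assms by (intro mult_left_mono) auto
  then show "b / sqrt ((b + d) / (a + d)) \<le> sqrt ((a + d) * (b + d))"
    unfolding ratio prod using x y by (simp add: field_simps)
qed

text \<open>The perturbation d keeps the ratio defined when a or b vanishes, and is small
enough that (a + d)(b + d) still tends to 0 even if a + b is unbounded.\<close>
lemma balancing_factors:
  fixes a b :: "nat \<Rightarrow> real"
  assumes a: "\<And>k. 0 \<le> a k" and b: "\<And>k. 0 \<le> b k" and ab: "(\<lambda>k. a k * b k) \<longlonglongrightarrow> 0"
  obtains c where "\<And>k. 0 < c k" "(\<lambda>k. c k * a k) \<longlonglongrightarrow> 0" "(\<lambda>k. b k / c k) \<longlonglongrightarrow> 0"
proof -
  define e where "e k = inverse (real (Suc k))" for k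
  define d where "d k = e k / (1 + a k + b k)" for k
  define c where "c k = sqrt ((b k + d k) / (a k + d k))" for k
  define P where "P k = (a k + d k) * (b k + d k)" for k
  have e: "0 < e k" "e k \<le> 1" for k unfolding e_def by (auto simp: inverse_le_1_iff)
  have d: "0 < d k" "d k \<le> e k" "d k * (a k + b k) \<le> e k" for k
  proof -
    show "0 < d k" "d k \<le> e k" using a[of k] b[of k] e[of k] unfolding d_def
      by (auto simp: divide_le_eq intro: mult_left_le)
    show "d k * (a k + b k) \<le> e k" using a[of k] b[of k] e[of k] unfolding d_def
      by (simp add: divide_le_eq mult_left_mono)
  qed
  have P_le: "P k \<le> a k * b k + 2 * e k" for k
  proof -
    have "d k * d k \<le> e k * 1" using d[of k] e[of k] by (intro mult_mono) auto
    then show ?thesis using d(3)[of k] unfolding P_def by (simp add: algebra_simps)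
  qed
  have "P \<longlonglongrightarrow> 0"
  proof (rule tendsto_sandwich[where f = "\<lambda>_. 0" and h = "\<lambda>k. a k * b k + 2 * e k"])
    show "\<forall>\<^sub>F k in sequentially. 0 \<le> P k"
      using a b d(1) by (simp add: P_def add_pos_nonneg less_imp_le)
    have "(\<lambda>k. a k * b k + 2 * e k) \<longlonglongrightarrow> 0 + 2 * 0"
      unfolding e_def by (intro tendsto_intros ab LIMSEQ_inverse_real_of_nat)
    then show "(\<lambda>k. a k * b k + 2 * e k) \<longlonglongrightarrow> 0" by simp
  qed (use P_le in auto)
  then have sqrt_P: "(\<lambda>k. sqrt (P k)) \<longlonglongrightarrow> 0" using tendsto_real_sqrt by fastforce
  have c_pos: "0 < c k" for k unfolding c_def using a[of k] b[of k] d(1)[of k] by simp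
  show ?thesis
  proof (rule that[OF c_pos])
    have "0 \<le> c k * a k" "c k * a k \<le> sqrt (P k)" for k
      using sqrt_ratio_balance(1)[OF a[of k] b[of k] d(1)[of k]] c_pos[of k] a[of k]
      by (auto simp: c_def P_def)
    then show "(\<lambda>k. c k * a k) \<longlonglongrightarrow> 0"
      by (intro tendsto_sandwich[OF _ _ tendsto_const sqrt_P]) auto
    have "0 \<le> b k / c k" "b k / c k \<le> sqrt (P k)" for k
      using sqrt_ratio_balance(2)[OF a[of k] b[of k] d(1)[of k]] c_pos[of k] b[of k]
      by (auto simp: c_def P_def)
    then show "(\<lambda>k. b k / c k) \<longlonglongrightarrow> 0"
      by (intro tendsto_sandwich[OF _ _ tendsto_const sqrt_P]) auto
  qed
qed

locale function_space =
  fixes Fs :: "('a::topological_space \<Rightarrow> complex) set"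
    and N :: "('a \<Rightarrow> complex) \<Rightarrow> real"
  assumes banach: "banach_function_space Fs N"
begin

lemma borel_measurable_if_mem: "f \<in> Fs \<Longrightarrow> f \<in> borel_measurable borel"
  using banach unfolding banach_function_space_def by blast

lemma add_closed: "f \<in> Fs \<Longrightarrow> g \<in> Fs \<Longrightarrow> (\<lambda>x. f x + g x) \<in> Fs"
  using banach unfolding banach_function_space_def by blast

lemma scale_closed: "f \<in> Fs \<Longrightarrow> (\<lambda>x. c * f x) \<in> Fs"
  using banach unfolding banach_function_space_def by blast

lemma N_nonneg: "f \<in> Fs \<Longrightarrow> 0 \<le> N f"
  using banach unfolding banach_function_space_def by blast

lemma N_triangle: "f \<in> Fs \<Longrightarrow> g \<in> Fs \<Longrightarrow> N (\<lambda>x. f x + g x) \<le> N f + N g"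
  using banach unfolding banach_function_space_def by blast

lemma N_scale: "f \<in> Fs \<Longrightarrow> N (\<lambda>x. c * f x) = cmod c * N f"
  using banach unfolding banach_function_space_def by blast

lemma uminus_closed: "f \<in> Fs \<Longrightarrow> (\<lambda>x. - f x) \<in> Fs"
  using scale_closed[of f "-1"] by simp

lemma N_uminus: "f \<in> Fs \<Longrightarrow> N (\<lambda>x. - f x) = N f"
  using N_scale[of f "-1"] by simp

lemma diff_closed: "f \<in> Fs \<Longrightarrow> g \<in> Fs \<Longrightarrow> (\<lambda>x. f x - g x) \<in> Fs"
  using add_closed[of f "\<lambda>x. - g x"] uminus_closed[of g] by simp

lemma N_diff_commute: "f \<in> Fs \<Longrightarrow> g \<in> Fs \<Longrightarrow> N (\<lambda>x. f x - g x) = N (\<lambda>x. g x - f x)"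
  using N_uminus[OF diff_closed, of g f] by simp

lemma N_diff_triangle:
  "f \<in> Fs \<Longrightarrow> g \<in> Fs \<Longrightarrow> h \<in> Fs \<Longrightarrow> N (\<lambda>x. f x - h x) \<le> N (\<lambda>x. f x - g x) + N (\<lambda>x. g x - h x)"
  using N_triangle[of "\<lambda>x. f x - g x" "\<lambda>x. g x - h x"] diff_closed by simp

lemma add_N_le:
  "f \<in> Fs \<and> N f \<le> a \<Longrightarrow> g \<in> Fs \<and> N g \<le> b \<Longrightarrow>
    (\<lambda>x. f x + g x) \<in> Fs \<and> N (\<lambda>x. f x + g x) \<le> a + b"
  using add_closed[of f g] N_triangle[of f g] by simp

lemma scale_N_le:
  "f \<in> Fs \<Longrightarrow> N f \<le> a \<Longrightarrow> 0 \<le> c \<Longrightarrow>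
    (\<lambda>x. complex_of_real c * f x) \<in> Fs \<and> N (\<lambda>x. complex_of_real c * f x) \<le> c * a"
  using scale_closed[of f "complex_of_real c"] N_scale[of f "complex_of_real c"]
  by (simp add: mult_left_mono)

lemma F_open_ball_around_dense:
  assumes "F_open Fs N U" and "U \<noteq> {}"
    and dense: "\<And>f e. f \<in> Fs \<Longrightarrow> e > 0 \<Longrightarrow> \<exists>g\<in>Fs. P g \<and> N (\<lambda>x. f x - g x) < e"
  shows "\<exists>f\<in>Fs. P f \<and> (\<exists>r>0. \<forall>h\<in>Fs. N (\<lambda>x. h x - f x) < r \<longrightarrow> h \<in> U)"
proof -
  obtain f0 where f0: "f0 \<in> U" using assms(2) by blast
  then obtain e where e: "e > 0" "\<And>h. h \<in> Fs \<Longrightarrow> N (\<lambda>x. h x - f0 x) < e \<Longrightarrow> h \<in> U"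
    and f0_in: "f0 \<in> Fs"
    using assms(1) unfolding F_open_def by blast
  obtain f where f: "f \<in> Fs" "P f" "N (\<lambda>x. f0 x - f x) < e / 2"
    using dense[OF f0_in, of "e / 2"] e(1) by auto
  have "h \<in> U" if h: "h \<in> Fs" "N (\<lambda>x. h x - f x) < e / 2" for h
  proof -
    have "N (\<lambda>x. h x - f0 x) \<le> N (\<lambda>x. h x - f x) + N (\<lambda>x. f0 x - f x)"
      using N_diff_triangle[OF h(1) f(1) f0_in] N_diff_commute[OF f(1) f0_in] by simp
    then show "h \<in> U" using e(2)[OF h(1)] h(2) f(3) by linarith
  qed
  then show ?thesis using f(1,2) e(1) by (intro bexI[of _ f] conjI exI[of _ "e / 2"]) auto
qed

lemma top_trans_pos_supercyclicI:
  assumes dense: "\<And>f e. f \<in> Fs \<Longrightarrow> e > 0 \<Longrightarrow> \<exists>g\<in>Fs. P g \<and> N (\<lambda>x. f x - g x) < e"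
    and approx: "\<And>f g e. f \<in> Fs \<Longrightarrow> g \<in> Fs \<Longrightarrow> P f \<Longrightarrow> P g \<Longrightarrow> e > 0 \<Longrightarrow>
      \<exists>n\<ge>1. \<exists>c>0. \<exists>h\<in>Fs. N (\<lambda>x. h x - f x) < e \<and>
        (\<lambda>x. complex_of_real c * C n h x) \<in> Fs \<and> N (\<lambda>x. complex_of_real c * C n h x - g x) < e"
  shows "top_trans_pos_supercyclic Fs N C"
  unfolding top_trans_pos_supercyclic_def
proof (intro allI impI)
  fix O1 O2 assume "F_open Fs N O1 \<and> O1 \<noteq> {} \<and> F_open Fs N O2 \<and> O2 \<noteq> {}"
  then have O1_open: "F_open Fs N O1" "O1 \<noteq> {}" and O2_open: "F_open Fs N O2" "O2 \<noteq> {}"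
    by auto
  obtain f r1 where f: "f \<in> Fs" "P f" "r1 > 0"
    and O1: "\<forall>h\<in>Fs. N (\<lambda>x. h x - f x) < r1 \<longrightarrow> h \<in> O1"
    using F_open_ball_around_dense[OF O1_open dense] by blast
  obtain g r2 where g: "g \<in> Fs" "P g" "r2 > 0"
    and O2: "\<forall>h\<in>Fs. N (\<lambda>x. h x - g x) < r2 \<longrightarrow> h \<in> O2"
    using F_open_ball_around_dense[OF O2_open dense] by blast
  have "min r1 r2 > 0" using f(3) g(3) by simp
  then obtain n c h where "n \<ge> 1" "c > 0" "h \<in> Fs" "N (\<lambda>x. h x - f x) < min r1 r2"
    "(\<lambda>x. complex_of_real c * C n h x) \<in> Fs" "N (\<lambda>x. complex_of_real c * C n h x - g x) < min r1 r2"
    using approx[OF f(1) g(1) f(2) g(2)] by blast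
  then have "h \<in> O1" "(\<lambda>x. complex_of_real c * C n h x) \<in> O2"
    using O1 O2 by auto
  then show "\<exists>n\<ge>1. \<exists>c::real. c > 0 \<and> (\<exists>f\<in>O1. (\<lambda>x. complex_of_real c * C n f x) \<in> O2)"
    using \<open>n \<ge> 1\<close> \<open>c > 0\<close> by blast
qed

end

locale solid_function_space = function_space +
  assumes solid: "solid Fs N"
begin

lemma solid_closed:
  "f \<in> Fs \<Longrightarrow> g \<in> borel_measurable borel \<Longrightarrow> (\<And>x. cmod (g x) \<le> cmod (f x)) \<Longrightarrow> g \<in> Fs"
  using solid unfolding solid_def by blast

lemma N_le_scaled:
  assumes f: "f \<in> Fs" and g: "g \<in> Fs" and s: "0 \<le> s" and le: "\<And>x. cmod (g x) \<le> s * cmod (f x)"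
  shows "N g \<le> s * N f"
proof -
  have "N g \<le> N (\<lambda>x. complex_of_real s * f x)"
    using solid scale_closed[OF f] borel_measurable_if_mem[OF g] le s unfolding solid_def by (simp add: norm_mult)
  then show ?thesis using N_scale[OF f] s by simp
qed

lemma mult_indicator_closed:
  assumes f: "f \<in> Fs" and A: "A \<in> sets borel"
  shows "(\<lambda>x. f x * indicator A x) \<in> Fs"
proof (rule solid_closed[OF f])
  show "(\<lambda>x. f x * indicator A x) \<in> borel_measurable borel"
    using borel_measurable_if_mem[OF f] A by measurable
qed (simp add: indicator_def)

lemma indicator_closed_subset:
  assumes K: "(indicator K :: 'a \<Rightarrow> complex) \<in> Fs" and "A \<in> sets borel" "A \<subseteq> K"
  shows "(indicator A :: 'a \<Rightarrow> complex) \<in> Fs"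
proof -
  have "(\<lambda>x. indicator K x * indicator A x :: complex) = indicator A"
    using \<open>A \<subseteq> K\<close> by (auto simp: indicator_def fun_eq_iff)
  then show ?thesis using mult_indicator_closed[OF K \<open>A \<in> sets borel\<close>] by simp
qed

lemma sets_borel_if_indicator_closed: "(indicator K :: 'a \<Rightarrow> complex) \<in> Fs \<Longrightarrow> K \<in> sets borel"
  using borel_measurable_if_mem[of "indicator K"] borel_measurable_indicator_iff[of K borel] by auto

lemma N_mult_indicator_le:
  assumes f: "f \<in> Fs" and B: "\<And>x. cmod (f x) \<le> B"
    and A: "A \<in> sets borel" "(indicator A :: 'a \<Rightarrow> complex) \<in> Fs"
  shows "N (\<lambda>x. f x * indicator A x) \<le> B * N (indicator A)"
proof (rule N_le_scaled[OF A(2) mult_indicator_closed[OF f A(1)]])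
  show "0 \<le> B" using order_trans[OF norm_ge_zero B] .
  show "cmod (f x * indicator A x) \<le> B * cmod (indicator A x :: complex)" for x
    using B[of x] by (simp add: indicator_def)
qed

end

definition transitivity_sequences ::
    "(('a::topological_space \<Rightarrow> complex) \<Rightarrow> real) \<Rightarrow> ('a \<Rightarrow> 'a) \<Rightarrow> ('a \<Rightarrow> real) \<Rightarrow> 'a set \<Rightarrow>
      (nat \<Rightarrow> nat) \<Rightarrow> (nat \<Rightarrow> 'a set) \<Rightarrow> (nat \<Rightarrow> 'a set) \<Rightarrow> (nat \<Rightarrow> 'a set) \<Rightarrow> bool" where
  "transitivity_sequences N \<alpha> w K nk E F D \<longleftrightarrow>
     strict_mono nk \<and>
     (\<forall>k. E k \<subseteq> K \<and> F k \<subseteq> K \<and> D k \<subseteq> K \<and>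
          E k \<in> sets borel \<and> F k \<in> sets borel \<and> D k \<in> sets borel \<and>
          E k = D k \<union> F k \<and> D k \<inter> F k = {}) \<and>
     (\<lambda>k. N (indicator (K - E k))) \<longlonglongrightarrow> 0 \<and>
     (\<lambda>k. supr (D k) (wback \<alpha> w (2 * nk k))) \<longlonglongrightarrow> 0 \<and>
     (\<lambda>k. supr (F k) (wfwdinv \<alpha> w (2 * nk k))) \<longlonglongrightarrow> 0 \<and>
     (\<lambda>k. supr (E k) (wback \<alpha> w (nk k)) * supr (D k) (wback \<alpha> w (nk k))) \<longlonglongrightarrow> 0 \<and>
     (\<lambda>k. supr (E k) (wback \<alpha> w (nk k)) * supr (F k) (wfwdinv \<alpha> w (nk k))) \<longlonglongrightarrow> 0 \<and>
     (\<lambda>k. supr (E k) (wfwdinv \<alpha> w (nk k)) * supr (D k) (wback \<alpha> w (nk k))) \<longlonglongrightarrow> 0 \<and>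
     (\<lambda>k. supr (E k) (wfwdinv \<alpha> w (nk k)) * supr (F k) (wfwdinv \<alpha> w (nk k))) \<longlonglongrightarrow> 0"

lemma transitivity_sequences_product_tendsto:
  assumes "transitivity_sequences N \<alpha> w K nk E F D"
  shows "(\<lambda>k. (supr (E k) (wback \<alpha> w (nk k)) + supr (E k) (wfwdinv \<alpha> w (nk k)))
      * (supr (D k) (wback \<alpha> w (nk k)) + supr (F k) (wfwdinv \<alpha> w (nk k)))) \<longlonglongrightarrow> 0"
proof -
  have "(\<lambda>k. (supr (E k) (wback \<alpha> w (nk k)) + supr (E k) (wfwdinv \<alpha> w (nk k)))
      * (supr (D k) (wback \<alpha> w (nk k)) + supr (F k) (wfwdinv \<alpha> w (nk k)))) \<longlonglongrightarrow> (0 + 0) + (0 + 0)"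
    unfolding distrib_left distrib_right
    using assms unfolding transitivity_sequences_def by (intro tendsto_add) blast+
  then show ?thesis by simp
qed

locale weighted_composition = solid_function_space Fs N
  for Fs :: "('a::topological_space \<Rightarrow> complex) set" and N +
  fixes \<alpha> :: "'a \<Rightarrow> 'a" and w :: "'a \<Rightarrow> real" and M Mi :: real
  assumes homeo: "homeomorphism UNIV UNIV \<alpha> (inv \<alpha>)"
    and invariant: "alpha_invariant Fs N \<alpha>"
    and w_measurable: "w \<in> borel_measurable borel"
    and w_pos: "\<And>x. 0 < w x"
    and w_le: "\<And>x. w x \<le> M"
    and inverse_w_le: "\<And>x. 1 / w x \<le> Mi"
begin

abbreviation "T \<equiv> Twc \<alpha> w"
abbreviation "S \<equiv> Swc \<alpha> w"

lemma inv_alpha_alpha [simp]: "inv \<alpha> (\<alpha> x) = x"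
  using homeomorphism_apply1[OF homeo] by simp

lemma alpha_inv_alpha [simp]: "\<alpha> (inv \<alpha> x) = x"
  using homeomorphism_apply2[OF homeo] by simp

lemma w_nonzero [simp]: "w x \<noteq> 0"
  using w_pos[of x] by simp

lemma compose_alpha_funpow: "f \<in> Fs \<Longrightarrow> f \<circ> (\<alpha> ^^ n) \<in> Fs \<and> N (f \<circ> (\<alpha> ^^ n)) = N f"
  using invariant unfolding alpha_invariant_def by (intro compose_funpow_invariant) blast+

lemma compose_inv_alpha_funpow:
  "f \<in> Fs \<Longrightarrow> f \<circ> (inv \<alpha> ^^ n) \<in> Fs \<and> N (f \<circ> (inv \<alpha> ^^ n)) = N f"
  using invariant unfolding alpha_invariant_def by (intro compose_funpow_invariant) blast+

lemma T_closed:
  assumes u: "u \<in> Fs"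
  shows "T u \<in> Fs"
proof -
  have u_alpha: "u \<circ> \<alpha> \<in> Fs" using compose_alpha_funpow[OF u, of 1] by simp
  show ?thesis
  proof (rule solid_closed[OF scale_closed[OF u_alpha, of "complex_of_real M"]])
    show "T u \<in> borel_measurable borel"
      using borel_measurable_if_mem[OF u_alpha] w_measurable by (simp add: Twc_def comp_def)
    show "cmod (T u x) \<le> cmod (complex_of_real M * (u \<circ> \<alpha>) x)" for x
      using w_le[of x] w_pos[of x]
      by (simp add: Twc_def norm_mult mult_right_mono)
  qed
qed

lemma S_closed:
  assumes u: "u \<in> Fs"
  shows "S u \<in> Fs"
proof -
  have "(\<lambda>x. u x / complex_of_real (w x)) \<in> Fs"
  proof (rule solid_closed[OF scale_closed[OF u, of "complex_of_real Mi"]])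
    show "(\<lambda>x. u x / complex_of_real (w x)) \<in> borel_measurable borel"
      using borel_measurable_if_mem[OF u] w_measurable by simp
    show "cmod (u x / complex_of_real (w x)) \<le> cmod (complex_of_real Mi * u x)" for x
    proof -
      have "0 \<le> Mi" using inverse_w_le[of x] w_pos[of x] by (meson less_imp_le order_trans zero_le_divide_1_iff)
      then show ?thesis
        using w_pos[of x] mult_right_mono[OF inverse_w_le[of x] norm_ge_zero[of "u x"]]
        by (simp add: norm_divide norm_mult)
    qed
  qed
  then have "(\<lambda>x. u x / complex_of_real (w x)) \<circ> (inv \<alpha> ^^ 1) \<in> Fs"
    using compose_inv_alpha_funpow by blast
  then show ?thesis by (simp add: Swc_def comp_def)
qed

lemma funpow_T_closed: "u \<in> Fs \<Longrightarrow> (T ^^ n) u \<in> Fs"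
  by (induction n) (simp_all add: T_closed)

lemma funpow_S_closed: "u \<in> Fs \<Longrightarrow> (S ^^ n) u \<in> Fs"
  by (induction n) (simp_all add: S_closed)

lemma funpow_T_funpow_S [simp]: "(T ^^ n) ((S ^^ n) u) = u"
  by (rule funpow_inverse_cancel) (simp add: Twc_def Swc_def fun_eq_iff)

lemma funpow_S_funpow_T [simp]: "(S ^^ n) ((T ^^ n) u) = u"
  by (rule funpow_inverse_cancel) (simp add: Twc_def Swc_def fun_eq_iff)

lemma funpow_T_add: "(T ^^ n) (\<lambda>x. p x + q x) = (\<lambda>x. (T ^^ n) p x + (T ^^ n) q x)"
  by (induction n) (simp_all add: Twc_def algebra_simps)

lemma funpow_T_scale: "(T ^^ n) (\<lambda>x. c * p x) = (\<lambda>x. c * (T ^^ n) p x)"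
  by (induction n) (simp_all add: Twc_def algebra_simps)

lemma funpow_S_add: "(S ^^ n) (\<lambda>x. p x + q x) = (\<lambda>x. (S ^^ n) p x + (S ^^ n) q x)"
  by (induction n) (simp_all add: Swc_def add_divide_distrib)

lemma funpow_S_scale: "(S ^^ n) (\<lambda>x. c * p x) = (\<lambda>x. c * (S ^^ n) p x)"
  by (induction n) (simp_all add: Swc_def)

lemma funpow_T_at_inv_alpha:
  "(T ^^ n) u ((inv \<alpha> ^^ n) y) = complex_of_real (wback \<alpha> w n y) * u y"
proof (induction n)
  case (Suc n)
  have "(T ^^ Suc n) u ((inv \<alpha> ^^ Suc n) y) =
      complex_of_real (w ((inv \<alpha> ^^ Suc n) y)) * (T ^^ n) u ((inv \<alpha> ^^ n) y)"
    by (simp add: Twc_def)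
  then show ?case using Suc by (simp add: wback_def prod.cl_ivl_Suc)
qed (simp add: wback_def)

lemma funpow_S_at_alpha:
  "(S ^^ n) u ((\<alpha> ^^ n) y) = complex_of_real (wfwdinv \<alpha> w n y) * u y"
proof (induction n)
  case (Suc n)
  have "(S ^^ Suc n) u ((\<alpha> ^^ Suc n) y) = (S ^^ n) u ((\<alpha> ^^ n) y) / complex_of_real (w ((\<alpha> ^^ n) y))"
    by (simp add: Swc_def)
  then show ?case using Suc by (simp add: wfwdinv_def)
qed (simp add: wfwdinv_def)

lemma N_funpow_T:
  assumes "u \<in> Fs"
  shows "(\<lambda>y. complex_of_real (wback \<alpha> w n y) * u y) \<in> Fs
    \<and> N ((T ^^ n) u) = N (\<lambda>y. complex_of_real (wback \<alpha> w n y) * u y)"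
proof -
  have "(T ^^ n) u \<circ> (inv \<alpha> ^^ n) = (\<lambda>y. complex_of_real (wback \<alpha> w n y) * u y)"
    by (simp add: fun_eq_iff funpow_T_at_inv_alpha)
  then show ?thesis using compose_inv_alpha_funpow[OF funpow_T_closed[OF assms], of n n] by simp
qed

lemma N_funpow_S:
  assumes "u \<in> Fs"
  shows "(\<lambda>y. complex_of_real (wfwdinv \<alpha> w n y) * u y) \<in> Fs
    \<and> N ((S ^^ n) u) = N (\<lambda>y. complex_of_real (wfwdinv \<alpha> w n y) * u y)"
proof -
  have "(S ^^ n) u \<circ> (\<alpha> ^^ n) = (\<lambda>y. complex_of_real (wfwdinv \<alpha> w n y) * u y)"
    by (simp add: fun_eq_iff funpow_S_at_alpha)
  then show ?thesis using compose_alpha_funpow[OF funpow_S_closed[OF assms], of n n] by simp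
qed

lemma wback_pos: "0 < wback \<alpha> w n y"
  unfolding wback_def by (rule prod_pos) (simp add: w_pos)

lemma wfwdinv_pos: "0 < wfwdinv \<alpha> w n y"
  unfolding wfwdinv_def by (rule prod_pos) (simp add: w_pos)

lemma bdd_above_wback: "bdd_above (wback \<alpha> w n ` A)"
proof (rule bdd_aboveI2)
  show "wback \<alpha> w n y \<le> M ^ n" for y
    using prod_mono[of "{1..n}" "\<lambda>j. w ((inv \<alpha> ^^ j) y)" "\<lambda>_. M"] w_le w_pos
    unfolding wback_def by (simp add: less_imp_le)
qed

lemma bdd_above_wfwdinv: "bdd_above (wfwdinv \<alpha> w n ` A)"
proof (rule bdd_aboveI2)
  show "wfwdinv \<alpha> w n y \<le> Mi ^ n" for y
    using prod_mono[of "{..<n}" "\<lambda>j. 1 / w ((\<alpha> ^^ j) y)" "\<lambda>_. Mi"] inverse_w_le w_pos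
    unfolding wfwdinv_def by (simp add: less_imp_le)
qed

lemma supr_wback_nonneg: "0 \<le> supr A (wback \<alpha> w n)"
  using supr_nonneg[OF _ bdd_above_wback] wback_pos less_imp_le by blast

lemma supr_wfwdinv_nonneg: "0 \<le> supr A (wfwdinv \<alpha> w n)"
  using supr_nonneg[OF _ bdd_above_wfwdinv] wfwdinv_pos less_imp_le by blast

lemma N_funpow_T_indicator_le:
  assumes u: "u \<in> Fs" and D: "D \<in> sets borel"
  shows "N ((T ^^ n) (\<lambda>x. u x * indicator D x)) \<le> supr D (wback \<alpha> w n) * N u"
proof -
  note weighted = N_funpow_T[OF mult_indicator_closed[OF u D], of n]
  have "N (\<lambda>y. complex_of_real (wback \<alpha> w n y) * (u y * indicator D y)) \<le> supr D (wback \<alpha> w n) * N u"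
  proof (rule N_le_scaled[OF u weighted[THEN conjunct1] supr_wback_nonneg])
    show "cmod (complex_of_real (wback \<alpha> w n y) * (u y * indicator D y))
        \<le> supr D (wback \<alpha> w n) * cmod (u y)" for y
      using supr_upper[OF _ bdd_above_wback, of y D n] wback_pos[of n y]
      by (cases "y \<in> D") (simp_all add: norm_mult mult_right_mono supr_wback_nonneg)
  qed
  then show ?thesis using weighted by simp
qed

lemma N_funpow_S_indicator_le:
  assumes u: "u \<in> Fs" and D: "D \<in> sets borel"
  shows "N ((S ^^ n) (\<lambda>x. u x * indicator D x)) \<le> supr D (wfwdinv \<alpha> w n) * N u"
proof -
  note weighted = N_funpow_S[OF mult_indicator_closed[OF u D], of n]
  have "N (\<lambda>y. complex_of_real (wfwdinv \<alpha> w n y) * (u y * indicator D y)) \<le> supr D (wfwdinv \<alpha> w n) * N u"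
  proof (rule N_le_scaled[OF u weighted[THEN conjunct1] supr_wfwdinv_nonneg])
    show "cmod (complex_of_real (wfwdinv \<alpha> w n y) * (u y * indicator D y))
        \<le> supr D (wfwdinv \<alpha> w n) * cmod (u y)" for y
      using supr_upper[OF _ bdd_above_wfwdinv, of y D n] wfwdinv_pos[of n y]
      by (cases "y \<in> D") (simp_all add: norm_mult mult_right_mono supr_wfwdinv_nonneg)
  qed
  then show ?thesis using weighted by simp
qed

definition transitivity_witness ::
    "('a \<Rightarrow> complex) \<Rightarrow> ('a \<Rightarrow> complex) \<Rightarrow> 'a set \<Rightarrow> 'a set \<Rightarrow> 'a set \<Rightarrow> nat \<Rightarrow> real \<Rightarrow> 'a \<Rightarrow> complex" where
  "transitivity_witness f g E D F n c = (\<lambda>x. f x * indicator E x + complex_of_real c *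
     ((T ^^ n) (\<lambda>x. g x * indicator D x) x + (S ^^ n) (\<lambda>x. g x * indicator F x) x))"

lemma N_transitivity_witness_diff_le:
  fixes n :: nat
  assumes f: "f \<in> Fs" and g: "g \<in> Fs" and f_bound: "\<And>x. cmod (f x) \<le> Bf"
    and f_support: "\<And>x. x \<notin> K \<Longrightarrow> f x = 0" and K: "(indicator K :: 'a \<Rightarrow> complex) \<in> Fs"
    and E: "E \<subseteq> K" "E \<in> sets borel" and D: "D \<in> sets borel" and F: "F \<in> sets borel"
    and c: "0 \<le> c"
  defines "h \<equiv> transitivity_witness f g E D F n c"
  shows "h \<in> Fs \<and> N (\<lambda>x. h x - f x)
    \<le> Bf * N (indicator (K - E)) + c * (supr D (wback \<alpha> w n) + supr F (wfwdinv \<alpha> w n)) * N g"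
proof -
  let ?u = "(T ^^ n) (\<lambda>x. g x * indicator D x)"
  let ?v = "(S ^^ n) (\<lambda>x. g x * indicator F x)"
  have KE: "K - E \<in> sets borel" using sets_borel_if_indicator_closed[OF K] E(2) by auto
  have W: "(\<lambda>x. - (f x * indicator (K - E) x)) \<in> Fs \<and>
      N (\<lambda>x. - (f x * indicator (K - E) x)) \<le> Bf * N (indicator (K - E))"
    using uminus_closed N_uminus mult_indicator_closed[OF f KE]
      N_mult_indicator_le[OF f f_bound KE indicator_closed_subset[OF K KE]] by auto
  have U: "(\<lambda>x. complex_of_real c * ?u x) \<in> Fs \<and>
      N (\<lambda>x. complex_of_real c * ?u x) \<le> c * (supr D (wback \<alpha> w n) * N g)"
    by (rule scale_N_le[OF funpow_T_closed[OF mult_indicator_closed[OF g D]]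
          N_funpow_T_indicator_le[OF g D] c])
  have V: "(\<lambda>x. complex_of_real c * ?v x) \<in> Fs \<and>
      N (\<lambda>x. complex_of_real c * ?v x) \<le> c * (supr F (wfwdinv \<alpha> w n) * N g)"
    by (rule scale_N_le[OF funpow_S_closed[OF mult_indicator_closed[OF g F]]
          N_funpow_S_indicator_le[OF g F] c])
  have "f x * indicator E x - f x = - (f x * indicator (K - E) x)" for x
    using f_support[of x] E(1) by (auto simp: indicator_def)
  then have difference: "(\<lambda>x. h x - f x) =
      (\<lambda>x. - (f x * indicator (K - E) x) + (complex_of_real c * ?u x + complex_of_real c * ?v x))"
    unfolding h_def transitivity_witness_def by (simp add: fun_eq_iff algebra_simps)
  note total = add_N_le[OF W add_N_le[OF U V], folded difference]
  have "(\<lambda>x. (h x - f x) + f x) \<in> Fs"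
    by (rule add_closed[OF total[THEN conjunct1] f])
  then show ?thesis using total by (simp add: algebra_simps)
qed

lemma scaled_Cop_transitivity_witness_diff:
  fixes n :: nat
  assumes g_support: "\<And>x. x \<notin> K \<Longrightarrow> g x = 0"
    and E: "E \<subseteq> K" "E = D \<union> F" and disjoint: "D \<inter> F = {}" and lam: "0 < lam"
  shows "(\<lambda>x. complex_of_real lam * Cop \<alpha> w n (transitivity_witness f g E D F n (2 / lam)) x - g x) =
    (\<lambda>x. complex_of_real (lam / 2) *
        ((T ^^ n) (\<lambda>x. f x * indicator E x) x + (S ^^ n) (\<lambda>x. f x * indicator E x) x)
      + ((T ^^ (2 * n)) (\<lambda>x. g x * indicator D x) x
      + ((S ^^ (2 * n)) (\<lambda>x. g x * indicator F x) x + - (g x * indicator (K - E) x))))"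
    (is "?lhs = (\<lambda>x. complex_of_real (lam / 2) * ((T ^^ n) ?fE x + (S ^^ n) ?fE x)
      + ((T ^^ (2 * n)) ?gD x + ((S ^^ (2 * n)) ?gF x + ?tail x)))")
proof
  fix x
  \<comment> \<open>Kept abstract so that simp does not split 2 / lam; the cancellation is then lam_c.\<close>
  define c where "c = complex_of_real (2 / lam)"
  have h: "transitivity_witness f g E D F n (2 / lam) =
      (\<lambda>x. ?fE x + c * ((T ^^ n) ?gD x + (S ^^ n) ?gF x))"
    unfolding transitivity_witness_def c_def ..
  have g_split: "?gD x + ?gF x = g x - g x * indicator (K - E) x"
    using g_support[of x] E disjoint
    by (cases "x \<in> K"; cases "x \<in> D"; cases "x \<in> F") (auto simp: indicator_def)
  have lam_c: "complex_of_real lam * c / 2 = 1" using lam by (simp add: c_def)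
  have "(T ^^ n) (transitivity_witness f g E D F n (2 / lam)) =
      (\<lambda>x. (T ^^ n) ?fE x + c * ((T ^^ (2 * n)) ?gD x + ?gF x))"
    and "(S ^^ n) (transitivity_witness f g E D F n (2 / lam)) =
      (\<lambda>x. (S ^^ n) ?fE x + c * (?gD x + (S ^^ (2 * n)) ?gF x))"
    unfolding h
    by (simp_all add: funpow_T_add funpow_T_scale funpow_S_add funpow_S_scale funpow_double_apply)
  then have "?lhs x = complex_of_real (lam / 2) * ((T ^^ n) ?fE x + (S ^^ n) ?fE x)
      + complex_of_real lam * c / 2 * ((T ^^ (2 * n)) ?gD x + (S ^^ (2 * n)) ?gF x)
      + complex_of_real lam * c / 2 * (?gD x + ?gF x) - g x"
    unfolding Cop_def by (simp add: algebra_simps)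
  also have "\<dots> = complex_of_real (lam / 2) * ((T ^^ n) ?fE x + (S ^^ n) ?fE x)
      + ((T ^^ (2 * n)) ?gD x + (S ^^ (2 * n)) ?gF x) + (g x - g x * indicator (K - E) x) - g x"
    by (simp only: lam_c g_split mult_1_left)
  finally show "?lhs x = complex_of_real (lam / 2) * ((T ^^ n) ?fE x + (S ^^ n) ?fE x)
      + ((T ^^ (2 * n)) ?gD x + ((S ^^ (2 * n)) ?gF x + ?tail x))"
    by (simp add: algebra_simps)
qed

lemma N_scaled_Cop_transitivity_witness_diff_le:
  fixes n :: nat
  assumes f: "f \<in> Fs" and g: "g \<in> Fs" and g_bound: "\<And>x. cmod (g x) \<le> Bg"
    and g_support: "\<And>x. x \<notin> K \<Longrightarrow> g x = 0" and K: "(indicator K :: 'a \<Rightarrow> complex) \<in> Fs"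
    and E: "E \<subseteq> K" "E \<in> sets borel" "E = D \<union> F" and D: "D \<in> sets borel" and F: "F \<in> sets borel"
    and disjoint: "D \<inter> F = {}" and lam: "0 < lam"
  defines "h \<equiv> transitivity_witness f g E D F n (2 / lam)"
  shows "(\<lambda>x. complex_of_real lam * Cop \<alpha> w n h x) \<in> Fs \<and>
    N (\<lambda>x. complex_of_real lam * Cop \<alpha> w n h x - g x)
    \<le> lam / 2 * (supr E (wback \<alpha> w n) + supr E (wfwdinv \<alpha> w n)) * N f
      + (supr D (wback \<alpha> w (2 * n)) + supr F (wfwdinv \<alpha> w (2 * n))) * N g
      + Bg * N (indicator (K - E))"
proof -
  let ?fE = "\<lambda>x. f x * indicator E x"
  have KE: "K - E \<in> sets borel" using sets_borel_if_indicator_closed[OF K] E(2) by auto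
  have fE: "?fE \<in> Fs" by (rule mult_indicator_closed[OF f E(2)])
  have "(\<lambda>x. (T ^^ n) ?fE x + (S ^^ n) ?fE x) \<in> Fs \<and>
      N (\<lambda>x. (T ^^ n) ?fE x + (S ^^ n) ?fE x) \<le> supr E (wback \<alpha> w n) * N f + supr E (wfwdinv \<alpha> w n) * N f"
    using funpow_T_closed[OF fE] funpow_S_closed[OF fE]
      N_funpow_T_indicator_le[OF f E(2)] N_funpow_S_indicator_le[OF f E(2)]
    by (intro add_N_le conjI)
  then have P: "(\<lambda>x. complex_of_real (lam / 2) * ((T ^^ n) ?fE x + (S ^^ n) ?fE x)) \<in> Fs \<and>
      N (\<lambda>x. complex_of_real (lam / 2) * ((T ^^ n) ?fE x + (S ^^ n) ?fE x))
      \<le> lam / 2 * (supr E (wback \<alpha> w n) * N f + supr E (wfwdinv \<alpha> w n) * N f)"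
    using lam by (intro scale_N_le) (simp_all add: conj_commute)
  have Q: "(T ^^ (2 * n)) (\<lambda>x. g x * indicator D x) \<in> Fs \<and>
      N ((T ^^ (2 * n)) (\<lambda>x. g x * indicator D x)) \<le> supr D (wback \<alpha> w (2 * n)) * N g"
    by (rule conjI[OF funpow_T_closed[OF mult_indicator_closed[OF g D]] N_funpow_T_indicator_le[OF g D]])
  have R: "(S ^^ (2 * n)) (\<lambda>x. g x * indicator F x) \<in> Fs \<and>
      N ((S ^^ (2 * n)) (\<lambda>x. g x * indicator F x)) \<le> supr F (wfwdinv \<alpha> w (2 * n)) * N g"
    by (rule conjI[OF funpow_S_closed[OF mult_indicator_closed[OF g F]] N_funpow_S_indicator_le[OF g F]])
  have W: "(\<lambda>x. - (g x * indicator (K - E) x)) \<in> Fs \<and>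
      N (\<lambda>x. - (g x * indicator (K - E) x)) \<le> Bg * N (indicator (K - E))"
    using uminus_closed N_uminus mult_indicator_closed[OF g KE]
      N_mult_indicator_le[OF g g_bound KE indicator_closed_subset[OF K KE]] by auto
  have "(\<lambda>x. complex_of_real lam * Cop \<alpha> w n h x - g x) =
    (\<lambda>x. complex_of_real (lam / 2) * ((T ^^ n) ?fE x + (S ^^ n) ?fE x)
      + ((T ^^ (2 * n)) (\<lambda>x. g x * indicator D x) x
      + ((S ^^ (2 * n)) (\<lambda>x. g x * indicator F x) x + - (g x * indicator (K - E) x))))"
    unfolding h_def using g_support E(1,3) disjoint lam by (rule scaled_Cop_transitivity_witness_diff)
  note total = add_N_le[OF P add_N_le[OF Q add_N_le[OF R W]], folded this]
  have "(\<lambda>x. (complex_of_real lam * Cop \<alpha> w n h x - g x) + g x) \<in> Fs"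
    by (rule add_closed[OF total[THEN conjunct1] g])
  then show ?thesis using total by (simp add: algebra_simps)
qed

lemma transitivity_witnesses_tendsto:
  assumes f: "f \<in> Fs" and g: "g \<in> Fs"
    and f_bound: "\<And>x. cmod (f x) \<le> Bf" and g_bound: "\<And>x. cmod (g x) \<le> Bg"
    and f_support: "\<And>x. x \<notin> K \<Longrightarrow> f x = 0" and g_support: "\<And>x. x \<notin> K \<Longrightarrow> g x = 0"
    and K: "(indicator K :: 'a \<Rightarrow> complex) \<in> Fs"
    and seq: "transitivity_sequences N \<alpha> w K nk E F D"
  obtains lam h where "\<And>k. 0 < lam k" "\<And>k. h k \<in> Fs"
    "\<And>k. (\<lambda>x. complex_of_real (lam k) * Cop \<alpha> w (nk k) (h k) x) \<in> Fs"
    "(\<lambda>k. N (\<lambda>x. h k x - f x)) \<longlonglongrightarrow> 0"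
    "(\<lambda>k. N (\<lambda>x. complex_of_real (lam k) * Cop \<alpha> w (nk k) (h k) x - g x)) \<longlonglongrightarrow> 0"
proof -
  obtain sets: "\<And>k. E k \<subseteq> K \<and> F k \<subseteq> K \<and> D k \<subseteq> K \<and>
          E k \<in> sets borel \<and> F k \<in> sets borel \<and> D k \<in> sets borel \<and>
          E k = D k \<union> F k \<and> D k \<inter> F k = {}"
    and lim_tail: "(\<lambda>k. N (indicator (K - E k))) \<longlonglongrightarrow> 0"
    and lim_D: "(\<lambda>k. supr (D k) (wback \<alpha> w (2 * nk k))) \<longlonglongrightarrow> 0"
    and lim_F: "(\<lambda>k. supr (F k) (wfwdinv \<alpha> w (2 * nk k))) \<longlonglongrightarrow> 0"
    using seq unfolding transitivity_sequences_def by blast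
  define a where "a k = supr (E k) (wback \<alpha> w (nk k)) + supr (E k) (wfwdinv \<alpha> w (nk k))" for k
  define b where "b k = supr (D k) (wback \<alpha> w (nk k)) + supr (F k) (wfwdinv \<alpha> w (nk k))" for k
  have "(\<lambda>k. a k * b k) \<longlonglongrightarrow> 0"
    unfolding a_def b_def by (rule transitivity_sequences_product_tendsto[OF seq])
  moreover have "0 \<le> a k" "0 \<le> b k" for k
    unfolding a_def b_def by (simp_all add: supr_wback_nonneg supr_wfwdinv_nonneg)
  ultimately obtain lam where lam: "\<And>k. 0 < lam k"
    and lim_a: "(\<lambda>k. lam k * a k) \<longlonglongrightarrow> 0" and lim_b: "(\<lambda>k. b k / lam k) \<longlonglongrightarrow> 0"
    using balancing_factors[of a b] by auto
  define h where "h k = transitivity_witness f g (E k) (D k) (F k) (nk k) (2 / lam k)" for k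
  define bound1 where "bound1 k = Bf * N (indicator (K - E k)) + 2 * (b k / lam k) * N g" for k
  define bound2 where "bound2 k = lam k * a k / 2 * N f
      + (supr (D k) (wback \<alpha> w (2 * nk k)) + supr (F k) (wfwdinv \<alpha> w (2 * nk k))) * N g
      + Bg * N (indicator (K - E k))" for k
  have close_f: "h k \<in> Fs \<and> N (\<lambda>x. h k x - f x) \<le> bound1 k" for k
    using N_transitivity_witness_diff_le[OF f g f_bound f_support K, of "E k" "D k" "F k" "2 / lam k" "nk k"]
      sets[of k] lam[of k]
    unfolding h_def bound1_def b_def by (simp add: less_imp_le)
  have close_g: "(\<lambda>x. complex_of_real (lam k) * Cop \<alpha> w (nk k) (h k) x) \<in> Fs \<and>
      N (\<lambda>x. complex_of_real (lam k) * Cop \<alpha> w (nk k) (h k) x - g x) \<le> bound2 k" for k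
    using N_scaled_Cop_transitivity_witness_diff_le[OF f g g_bound g_support K, of "E k" "D k" "F k" "lam k" "nk k"]
      sets[of k] lam[of k]
    unfolding h_def bound2_def a_def by (simp add: algebra_simps add_divide_distrib)
  have "bound1 \<longlonglongrightarrow> Bf * 0 + 2 * 0 * N g"
    unfolding bound1_def[abs_def] by (intro tendsto_intros lim_tail lim_b)
  then have "bound1 \<longlonglongrightarrow> 0" by simp
  then have lim_f: "(\<lambda>k. N (\<lambda>x. h k x - f x)) \<longlonglongrightarrow> 0"
    by (rule tendsto_sandwich[where f = "\<lambda>_. 0" and h = bound1, rotated 3])
      (simp_all add: close_f N_nonneg diff_closed f)
  have "bound2 \<longlonglongrightarrow> 0 / 2 * N f + (0 + 0) * N g + Bg * 0"
    unfolding bound2_def[abs_def] by (intro tendsto_intros lim_a lim_D lim_F lim_tail) auto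
  then have "bound2 \<longlonglongrightarrow> 0" by simp
  then have lim_g: "(\<lambda>k. N (\<lambda>x. complex_of_real (lam k) * Cop \<alpha> w (nk k) (h k) x - g x)) \<longlonglongrightarrow> 0"
    by (rule tendsto_sandwich[where f = "\<lambda>_. 0" and h = bound2, rotated 3])
      (simp_all add: close_g N_nonneg diff_closed g)
  show ?thesis
  proof (rule that[OF lam _ _ lim_f lim_g])
    show "h k \<in> Fs" for k using close_f by blast
    show "(\<lambda>x. complex_of_real (lam k) * Cop \<alpha> w (nk k) (h k) x) \<in> Fs" for k using close_g by blast
  qed
qed

lemma approximation_from_transitivity_sequences:
  assumes f: "f \<in> Fs" and g: "g \<in> Fs"
    and f_bound: "\<And>x. cmod (f x) \<le> Bf" and g_bound: "\<And>x. cmod (g x) \<le> Bg"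
    and f_support: "\<And>x. x \<notin> K \<Longrightarrow> f x = 0" and g_support: "\<And>x. x \<notin> K \<Longrightarrow> g x = 0"
    and K: "(indicator K :: 'a \<Rightarrow> complex) \<in> Fs"
    and seq: "transitivity_sequences N \<alpha> w K nk E F D" and e: "0 < e"
  shows "\<exists>n\<ge>1. \<exists>c>0. \<exists>h\<in>Fs. N (\<lambda>x. h x - f x) < e \<and>
    (\<lambda>x. complex_of_real c * Cop \<alpha> w n h x) \<in> Fs \<and>
    N (\<lambda>x. complex_of_real c * Cop \<alpha> w n h x - g x) < e"
proof -
  obtain lam h where lam: "\<And>k. 0 < lam k" and h: "\<And>k. h k \<in> Fs"
    "\<And>k. (\<lambda>x. complex_of_real (lam k) * Cop \<alpha> w (nk k) (h k) x) \<in> Fs"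
    and lim_f: "(\<lambda>k. N (\<lambda>x. h k x - f x)) \<longlonglongrightarrow> 0"
    and lim_g: "(\<lambda>k. N (\<lambda>x. complex_of_real (lam k) * Cop \<alpha> w (nk k) (h k) x - g x)) \<longlonglongrightarrow> 0"
    by (rule transitivity_witnesses_tendsto[OF f g f_bound g_bound f_support g_support K seq])
      (assumption | rule that)+
  have "strict_mono nk" using seq unfolding transitivity_sequences_def by blast
  then have "\<forall>\<^sub>F k in sequentially. 1 \<le> nk k"
    unfolding eventually_sequentially using seq_suble le_trans by blast
  moreover have "\<forall>\<^sub>F k in sequentially. N (\<lambda>x. h k x - f x) < e"
    using lim_f e by (rule order_tendstoD(2))
  moreover have "\<forall>\<^sub>F k in sequentially.
      N (\<lambda>x. complex_of_real (lam k) * Cop \<alpha> w (nk k) (h k) x - g x) < e"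
    using lim_g e by (rule order_tendstoD(2))
  ultimately have "\<forall>\<^sub>F k in sequentially. 1 \<le> nk k \<and> N (\<lambda>x. h k x - f x) < e \<and>
      N (\<lambda>x. complex_of_real (lam k) * Cop \<alpha> w (nk k) (h k) x - g x) < e"
    by (intro eventually_conj)
  then obtain k where "1 \<le> nk k" "N (\<lambda>x. h k x - f x) < e"
      "N (\<lambda>x. complex_of_real (lam k) * Cop \<alpha> w (nk k) (h k) x - g x) < e"
    unfolding eventually_sequentially by blast
  then show ?thesis using lam[of k] h[of k] by blast
qed

lemma top_trans_pos_supercyclic_Cop:
  assumes compact_indicator: "\<And>K. compact K \<Longrightarrow> (indicator K :: 'a \<Rightarrow> complex) \<in> Fs"
    and dense: "\<And>f e. f \<in> Fs \<Longrightarrow> e > 0 \<Longrightarrow>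
      \<exists>g\<in>Fs. bounded (range g) \<and> compact (closure {x. g x \<noteq> 0}) \<and> N (\<lambda>x. f x - g x) < e"
    and sequences: "\<And>K. compact K \<Longrightarrow> \<exists>nk E F D. transitivity_sequences N \<alpha> w K nk E F D"
  shows "top_trans_pos_supercyclic Fs N (Cop \<alpha> w)"
proof (rule top_trans_pos_supercyclicI
    [where P = "\<lambda>g. bounded (range g) \<and> compact (closure {x. g x \<noteq> 0})"])
  show "\<exists>g\<in>Fs. (bounded (range g) \<and> compact (closure {x. g x \<noteq> 0})) \<and> N (\<lambda>x. f x - g x) < e"
    if "f \<in> Fs" "e > 0" for f e
    using dense[OF that] by simp
next
  fix f g and e :: real
  assume f: "f \<in> Fs" "bounded (range f) \<and> compact (closure {x. f x \<noteq> 0})"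
    and g: "g \<in> Fs" "bounded (range g) \<and> compact (closure {x. g x \<noteq> 0})" and e: "e > 0"
  obtain Bf Bg where "\<forall>y\<in>range f. norm y \<le> Bf" "\<forall>y\<in>range g. norm y \<le> Bg"
    using f(2) g(2) unfolding bounded_iff by (elim conjE exE) blast
  then have f_bound: "\<And>x. cmod (f x) \<le> Bf" and g_bound: "\<And>x. cmod (g x) \<le> Bg"
    by auto
  define K where "K = closure {x. f x \<noteq> 0} \<union> closure {x. g x \<noteq> 0}"
  have K: "compact K" unfolding K_def using f(2) g(2) by (simp add: compact_Un)
  have f_support: "f x = 0" and g_support: "g x = 0" if "x \<notin> K" for x
    using that closure_subset[of "{x. f x \<noteq> 0}"] closure_subset[of "{x. g x \<noteq> 0}"]
    unfolding K_def by blast+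
  obtain nk E F D where seq: "transitivity_sequences N \<alpha> w K nk E F D"
    using sequences[OF K] by blast
  show "\<exists>n\<ge>1. \<exists>c>0. \<exists>h\<in>Fs. N (\<lambda>x. h x - f x) < e \<and>
      (\<lambda>x. complex_of_real c * Cop \<alpha> w n h x) \<in> Fs \<and>
      N (\<lambda>x. complex_of_real c * Cop \<alpha> w n h x - g x) < e"
    by (rule approximation_from_transitivity_sequences[OF f(1) g(1) f_bound g_bound f_support g_support
          compact_indicator[OF K] seq e])
qed

end

theorem theorem5p5:
  fixes Fs :: "('a::topological_space \<Rightarrow> complex) set"
    and N :: "('a \<Rightarrow> complex) \<Rightarrow> real"
    and \<alpha> :: "'a \<Rightarrow> 'a"
    and w :: "'a \<Rightarrow> real"
  assumes homeo: "homeomorphism UNIV UNIV \<alpha> (inv \<alpha>)"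
    and bfs: "banach_function_space Fs N"
    and omega: "condition_Omega Fs N \<alpha>"
    and w_meas: "w \<in> borel_measurable borel"
    and w_pos: "\<forall>x. w x > 0"
    and w_bdd: "\<exists>M. \<forall>x. w x \<le> M"
    and winv_bdd: "\<exists>M. \<forall>x. 1 / w x \<le> M"
    and hyp: "\<forall>K. compact K \<longrightarrow>
      (\<exists>(nk::nat \<Rightarrow> nat) (E::nat \<Rightarrow> 'a set) (Fk::nat \<Rightarrow> 'a set) (D::nat \<Rightarrow> 'a set).
         strict_mono nk \<and>
         (\<forall>k. E k \<subseteq> K \<and> Fk k \<subseteq> K \<and> D k \<subseteq> K \<and>
              E k \<in> sets borel \<and> Fk k \<in> sets borel \<and> D k \<in> sets borel \<and>
              E k = D k \<union> Fk k \<and> D k \<inter> Fk k = {}) \<and>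
         (\<lambda>k. N (indicator (K - E k))) \<longlonglongrightarrow> 0 \<and>
         (\<lambda>k. supr (D k) (wback \<alpha> w (2 * nk k))) \<longlonglongrightarrow> 0 \<and>
         (\<lambda>k. supr (Fk k) (wfwdinv \<alpha> w (2 * nk k))) \<longlonglongrightarrow> 0 \<and>
         (\<lambda>k. supr (E k) (wback \<alpha> w (nk k)) * supr (D k) (wback \<alpha> w (nk k))) \<longlonglongrightarrow> 0 \<and>
         (\<lambda>k. supr (E k) (wback \<alpha> w (nk k)) * supr (Fk k) (wfwdinv \<alpha> w (nk k))) \<longlonglongrightarrow> 0 \<and>
         (\<lambda>k. supr (E k) (wfwdinv \<alpha> w (nk k)) * supr (D k) (wback \<alpha> w (nk k))) \<longlonglongrightarrow> 0 \<and>
         (\<lambda>k. supr (E k) (wfwdinv \<alpha> w (nk k)) * supr (Fk k) (wfwdinv \<alpha> w (nk k))) \<longlonglongrightarrow> 0)"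
  shows "top_trans_pos_supercyclic Fs N (Cop \<alpha> w)"
proof -
  obtain M Mi where "\<forall>x. w x \<le> M" "\<forall>x. 1 / w x \<le> Mi"
    using w_bdd winv_bdd by blast
  then interpret weighted_composition Fs N \<alpha> w M Mi
    using homeo bfs omega w_meas w_pos
    by unfold_locales (auto simp: condition_Omega_def)
  show ?thesis
  proof (rule top_trans_pos_supercyclic_Cop)
    show "\<And>K. compact K \<Longrightarrow> (indicator K :: 'a \<Rightarrow> complex) \<in> Fs"
      and "\<And>f e. f \<in> Fs \<Longrightarrow> e > 0 \<Longrightarrow>
        \<exists>g\<in>Fs. bounded (range g) \<and> compact (closure {x. g x \<noteq> 0}) \<and> N (\<lambda>x. f x - g x) < e"
      using omega unfolding condition_Omega_def by auto
    show "\<And>K. compact K \<Longrightarrow> \<exists>nk E F D. transitivity_sequences N \<alpha> w K nk E F D"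
      unfolding transitivity_sequences_def by (rule hyp[rule_format])
  qed
qed

end
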